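(* Let $J$ be an instance of TAP and let $s_1,s_2,\dots,s_m$ be an enumeration of all schools (a master list of schools) such that, for every applicant $a$, the preference list of $a$ is the restriction of the order $s_1,\dots,s_m$ to $S(a)$. Then $J$ admits exactly one stable matching, namely the matching $\mathcal M$ produced by the following procedure (Dual Serial Dictatorship): start with $\mathcal M=\emptyset$; for $j=1,2,\dots,m$ in turn, go through the preference list $a_{i_1},\dots,a_{i_\ell}$ of $s_j$ in order and, for $r=1,\dots,\ell$, if $a_{i_r}$ is currently unassigned in $\mathcal M$ and $|\mathcal M_p(s_j)|<c_p(s_j)$ for both subjects $p\in\mathbf p(a_{i_r})$, add $(a_{i_r},s_j)$ to $\mathcal M$.
   Context: An instance of the Teachers Assignment Problem (TAP) consists of a finite set $A$ of applicants, a finite set $S$ of schools and a finite set $P$ of subjects. Each applicant $a\in A$ has a type $\mathbf p(a)=\{p_1(a),p_2(a)\}\subseteq P$ consisting of two distinct subjects, a set $S(a)\subseteq S$ of acceptable schools, and a strict linear order (her preference list) on $S(a)$. Each school $s$ has a partial capacity $c_p(s)\in\mathbb N$ for each subject $p\in P$, and a strict linear order (its preference list) on the set of applicants $a$ with $s\in S(a)$. An assignment $\mathcal M$ is a set of pairs $(a,s)$ with $s\in S(a)$ such that each applicant lies in at most one pair; write $\mathcal M(a)=s$ if $(a,s)\in\mathcal M$ and $\mathcal M(a)=\emptyset$ if $a$ is in no pair (unassigned). For a school $s$ and subjects $p,r$ let $\mathcal M_p(s)=\{a:(a,s)\in\mathcal M,\ p\in\mathbf p(a)\}$ and $\mathcal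 M_{p,r}(s)=\{a:(a,s)\in\mathcal M,\ \mathbf p(a)=\{p,r\}\}$. An assignment is a matching if $|\mathcal M_p(s)|\le c_p(s)$ for all $s\in S$, $p\in P$. School $s$ is undersubscribed in $p$ if $|\mathcal M_p(s)|<c_p(s)$. A pair $(a,s)$ with $s\in S(a)$ and $\mathbf p(a)=\{p_1,p_2\}$ blocks a matching $\mathcal M$ if ($a$ is unassigned or $a$ prefers $s$ to $\mathcal M(a)$) and at least one of: (i) $s$ is undersubscribed in both $p_1$ and $p_2$; (ii) for some $i\in\{1,2\}$, $s$ is undersubscribed in $p_i$ and $s$ prefers $a$ to some applicant in $\mathcal M_{p_{3-i}}(s)$; (iii) $s$ prefers $a$ to some applicant in $\mathcal M_{p_1,p_2}(s)$; (iv) $s$ prefers $a$ to two distinct applicants $a_1\in\mathcal M_{p_1}(s)$ and $a_2\in\mathcal M_{p_2}(s)$. A matching is stable if no pair blocks it. *)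

theory Defs
  imports Main
begin

text \<open>Applicants of type 'a, schools of type 's, subjects of type 'p.
  An instance consists of: finite sets A (applicants), S (schools), P (subjects);
  ptype a = the type p(a) (a 2-element subset of P); acc a = S(a);
  apref a s s' : applicant a prefers s to s';
  cap s p = c_p(s); spref s b b' : school s prefers b to b'.\<close>

definition strict_lin_on :: "'x set \<Rightarrow> ('x \<Rightarrow> 'x \<Rightarrow> bool) \<Rightarrow> bool" where
  "strict_lin_on X R \<longleftrightarrow>
     (\<forall>x\<in>X. \<not> R x x) \<and>
     (\<forall>x\<in>X. \<forall>y\<in>X. \<forall>z\<in>X. R x y \<longrightarrow> R y z \<longrightarrow> R x z) \<and>
     (\<forall>x\<in>X. \<forall>y\<in>X. x \<noteq> y \<longrightarrow> R x y \<or> R y x)"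

definition tap_instance ::
  "'a set \<Rightarrow> 's set \<Rightarrow> 'p set \<Rightarrow> ('a \<Rightarrow> 'p set) \<Rightarrow> ('a \<Rightarrow> 's set)
   \<Rightarrow> ('a \<Rightarrow> 's \<Rightarrow> 's \<Rightarrow> bool) \<Rightarrow> ('s \<Rightarrow> 'p \<Rightarrow> nat) \<Rightarrow> ('s \<Rightarrow> 'a \<Rightarrow> 'a \<Rightarrow> bool) \<Rightarrow> bool" where
  "tap_instance A S P ptype acc apref cap spref \<longleftrightarrow>
     finite A \<and> finite S \<and> finite P \<and>
     (\<forall>a\<in>A. (\<exists>p1 p2. p1 \<noteq> p2 \<and> ptype a = {p1, p2}) \<and> ptype a \<subseteq> P) \<and>
     (\<forall>a\<in>A. acc a \<subseteq> S \<and> strict_lin_on (acc a) (apref a)) \<and>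
     (\<forall>s\<in>S. strict_lin_on {a\<in>A. s \<in> acc a} (spref s))"

definition Msub :: "('a \<Rightarrow> 'p set) \<Rightarrow> ('a \<times> 's) set \<Rightarrow> 's \<Rightarrow> 'p \<Rightarrow> 'a set" where
  "Msub ptype M s p = {a. (a, s) \<in> M \<and> p \<in> ptype a}"

definition Msub2 :: "('a \<Rightarrow> 'p set) \<Rightarrow> ('a \<times> 's) set \<Rightarrow> 's \<Rightarrow> 'p \<Rightarrow> 'p \<Rightarrow> 'a set" where
  "Msub2 ptype M s p r = {a. (a, s) \<in> M \<and> ptype a = {p, r}}"

definition unassigned :: "('a \<times> 's) set \<Rightarrow> 'a \<Rightarrow> bool" where
  "unassigned M a \<longleftrightarrow> (\<forall>s. (a, s) \<notin> M)"

definition undersub :: "('a \<Rightarrow> 'p set) \<Rightarrow> ('s \<Rightarrow> 'p \<Rightarrow> nat) \<Rightarrow> ('a \<times> 's) set \<Rightarrow> 's \<Rightarrow> 'p \<Rightarrow> bool" where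
  "undersub ptype cap M s p \<longleftrightarrow> card (Msub ptype M s p) < cap s p"

definition is_assignment :: "'a set \<Rightarrow> ('a \<Rightarrow> 's set) \<Rightarrow> ('a \<times> 's) set \<Rightarrow> bool" where
  "is_assignment A acc M \<longleftrightarrow>
     (\<forall>(a, s)\<in>M. a \<in> A \<and> s \<in> acc a) \<and>
     (\<forall>a s s'. (a, s) \<in> M \<longrightarrow> (a, s') \<in> M \<longrightarrow> s = s')"

definition is_matching ::
  "'a set \<Rightarrow> 's set \<Rightarrow> 'p set \<Rightarrow> ('a \<Rightarrow> 'p set) \<Rightarrow> ('a \<Rightarrow> 's set) \<Rightarrow> ('s \<Rightarrow> 'p \<Rightarrow> nat)
   \<Rightarrow> ('a \<times> 's) set \<Rightarrow> bool" where
  "is_matching A S P ptype acc cap M \<longleftrightarrow>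
     is_assignment A acc M \<and> (\<forall>s\<in>S. \<forall>p\<in>P. card (Msub ptype M s p) \<le> cap s p)"

definition blocks ::
  "'a set \<Rightarrow> ('a \<Rightarrow> 'p set) \<Rightarrow> ('a \<Rightarrow> 's set) \<Rightarrow> ('a \<Rightarrow> 's \<Rightarrow> 's \<Rightarrow> bool) \<Rightarrow> ('s \<Rightarrow> 'p \<Rightarrow> nat)
   \<Rightarrow> ('s \<Rightarrow> 'a \<Rightarrow> 'a \<Rightarrow> bool) \<Rightarrow> ('a \<times> 's) set \<Rightarrow> 'a \<Rightarrow> 's \<Rightarrow> bool" where
  "blocks A ptype acc apref cap spref M a s \<longleftrightarrow>
     a \<in> A \<and> s \<in> acc a \<and>
     (unassigned M a \<or> (\<exists>s'. (a, s') \<in> M \<and> apref a s s')) \<and>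
     (\<exists>p1 p2. p1 \<noteq> p2 \<and> ptype a = {p1, p2} \<and>
        ((undersub ptype cap M s p1 \<and> undersub ptype cap M s p2) \<or>
         (undersub ptype cap M s p1 \<and> (\<exists>b\<in>Msub ptype M s p2. spref s a b)) \<or>
         (undersub ptype cap M s p2 \<and> (\<exists>b\<in>Msub ptype M s p1. spref s a b)) \<or>
         (\<exists>b\<in>Msub2 ptype M s p1 p2. spref s a b) \<or>
         (\<exists>a1\<in>Msub ptype M s p1. \<exists>a2\<in>Msub ptype M s p2.
             a1 \<noteq> a2 \<and> spref s a a1 \<and> spref s a a2)))"

definition stable ::
  "'a set \<Rightarrow> 's set \<Rightarrow> 'p set \<Rightarrow> ('a \<Rightarrow> 'p set) \<Rightarrow> ('a \<Rightarrow> 's set)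
   \<Rightarrow> ('a \<Rightarrow> 's \<Rightarrow> 's \<Rightarrow> bool) \<Rightarrow> ('s \<Rightarrow> 'p \<Rightarrow> nat) \<Rightarrow> ('s \<Rightarrow> 'a \<Rightarrow> 'a \<Rightarrow> bool)
   \<Rightarrow> ('a \<times> 's) set \<Rightarrow> bool" where
  "stable A S P ptype acc apref cap spref M \<longleftrightarrow>
     is_matching A S P ptype acc cap M \<and>
     (\<forall>a s. \<not> blocks A ptype acc apref cap spref M a s)"

fun dsd_school :: "('a \<Rightarrow> 'p set) \<Rightarrow> ('s \<Rightarrow> 'p \<Rightarrow> nat) \<Rightarrow> 's \<Rightarrow> 'a list
    \<Rightarrow> ('a \<times> 's) set \<Rightarrow> ('a \<times> 's) set" where
  "dsd_school ptype cap s [] M = M"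
| "dsd_school ptype cap s (a # as) M =
     dsd_school ptype cap s as
       (if unassigned M a \<and> (\<forall>p\<in>ptype a. card (Msub ptype M s p) < cap s p)
        then insert (a, s) M else M)"

text \<open>L s is the preference list of school s; ms is the master list of schools.\<close>
definition dsd :: "('a \<Rightarrow> 'p set) \<Rightarrow> ('s \<Rightarrow> 'p \<Rightarrow> nat) \<Rightarrow> ('s \<Rightarrow> 'a list) \<Rightarrow> 's list
    \<Rightarrow> ('a \<times> 's) set" where
  "dsd ptype cap L ms = foldl (\<lambda>M s. dsd_school ptype cap s (L s) M) {} ms"

end

theory Submission
  imports Defs "HOL-Library.Product_Lexorder"
begin

text \<open>Call a set M of acceptable pairs consistent if it contains (a, s) exactly when a holds no
  school it prefers to s and, for each subject p of a, fewer than c_p(s) applicants of subject p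
  placed at s are ranked by s above a. A stable matching is consistent: a pair it leaves out that
  passes this test would block it. Conversely a consistent set respects the capacities (apply the
  test to the applicant at s that s ranks last), and a blocking pair would pass the test.
  Under a master list the test for (a, s) only inspects pairs at earlier schools and pairs at s
  with applicants ranked above a, so a consistent set is determined by induction on the position
  of s in the master list and then of a in the list of s; Dual Serial Dictatorship decides the
  pairs in exactly this order and therefore produces the consistent set.\<close>

lemma strict_lin_on_irrefl: "strict_lin_on X R \<Longrightarrow> x \<in> X \<Longrightarrow> \<not> R x x"
  unfolding strict_lin_on_def by blast

lemma strict_lin_on_asym: "strict_lin_on X R \<Longrightarrow> x \<in> X \<Longrightarrow> y \<in> X \<Longrightarrow> R x y \<Longrightarrow> \<not> R y x"
  unfolding strict_lin_on_def by blast

lemma strict_lin_on_total: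
  "strict_lin_on X R \<Longrightarrow> x \<in> X \<Longrightarrow> y \<in> X \<Longrightarrow> x \<noteq> y \<Longrightarrow> R x y \<or> R y x"
  unfolding strict_lin_on_def by blast

definition index :: "'x list \<Rightarrow> 'x \<Rightarrow> nat" where
  "index xs x = (LEAST i. i < length xs \<and> xs ! i = x)"

lemma index_less_length_nth: "x \<in> set xs \<Longrightarrow> index xs x < length xs \<and> xs ! index xs x = x"
proof -
  assume "x \<in> set xs"
  then obtain i where "i < length xs" "xs ! i = x" by (auto simp: in_set_conv_nth)
  then show ?thesis
    unfolding index_def by (rule LeastI[of "\<lambda>i. i < length xs \<and> xs ! i = x", OF conjI])
qed

lemma index_nth: "distinct xs \<Longrightarrow> i < length xs \<Longrightarrow> index xs (xs ! i) = i"
  using index_less_length_nth[of "xs ! i" xs] nth_eq_iff_index_eq by fastforce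

lemma index_inject: "x \<in> set xs \<Longrightarrow> y \<in> set xs \<Longrightarrow> index xs x = index xs y \<longleftrightarrow> x = y"
  using index_less_length_nth by metis

lemma index_less_if_in_take: "distinct xs \<Longrightarrow> x \<in> set (take k xs) \<Longrightarrow> index xs x < k"
  by (auto simp: in_set_conv_nth index_nth)

lemma ex_nth_less_iff_index_less:
  assumes "distinct xs" "x \<in> set xs" "y \<in> set xs"
  shows "(\<exists>i j. i < j \<and> j < length xs \<and> xs ! i = x \<and> xs ! j = y) \<longleftrightarrow> index xs x < index xs y"
proof
  assume "\<exists>i j. i < j \<and> j < length xs \<and> xs ! i = x \<and> xs ! j = y"
  then show "index xs x < index xs y" using index_nth[OF assms(1)] by auto
next
  assume "index xs x < index xs y"
  then show "\<exists>i j. i < j \<and> j < length xs \<and> xs ! i = x \<and> xs ! j = y"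
    using index_less_length_nth[OF assms(2)] index_less_length_nth[OF assms(3)] by blast
qed

lemma sorted_wrt_index_less:
  assumes "sorted_wrt R xs" "x \<in> set xs" "y \<in> set xs" "R x y" "\<not> R y x"
  shows "index xs x < index xs y"
proof (rule ccontr)
  assume "\<not> index xs x < index xs y"
  then consider "index xs y < index xs x" | "index xs x = index xs y" by linarith
  then show False
  proof cases
    case 1
    then have "R (xs ! index xs y) (xs ! index xs x)"
      using sorted_wrt_nth_less[OF assms(1)] index_less_length_nth[OF assms(2)] by blast
    then show False using assms(2-5) index_less_length_nth by metis
  next
    case 2
    then show False using assms(2-5) index_inject by metis
  qed
qed

text \<open>When school s reaches applicant a, the capacity test only counts applicants admitted
  earlier, and these are exactly the applicants of the final result that s ranks above a.\<close>

lemma dsd_school_eq: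
  assumes "distinct xs" "sorted_wrt R xs" "\<forall>a\<in>set xs. \<forall>b\<in>set xs. R a b \<longrightarrow> \<not> R b a"
    "\<forall>b. (b, s) \<in> M \<longrightarrow> b \<notin> set xs \<and> (\<forall>a\<in>set xs. R b a)"
  shows "dsd_school ptype cap s xs M = M \<union> {(a, s) | a. a \<in> set xs \<and> unassigned M a \<and>
     (\<forall>p\<in>ptype a. card {b \<in> Msub ptype (dsd_school ptype cap s xs M) s p. R b a} < cap s p)}"
  using assms
proof (induction xs arbitrary: M)
  case Nil
  then show ?case by simp
next
  case (Cons x xs)
  define admit where "admit = (unassigned M x \<and> (\<forall>p\<in>ptype x. card (Msub ptype M s p) < cap s p))"
  define M1 where "M1 = (if admit then insert (x, s) M else M)"
  define M' where "M' = dsd_school ptype cap s (x # xs) M"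
  have M'_M1: "M' = dsd_school ptype cap s xs M1"
    unfolding M'_def M1_def admit_def by simp
  have "\<forall>b. (b, s) \<in> M1 \<longrightarrow> b \<notin> set xs \<and> (\<forall>a\<in>set xs. R b a)"
    using Cons.prems unfolding M1_def by auto
  then have IH: "M' = M1 \<union> {(a, s) | a. a \<in> set xs \<and> unassigned M1 a \<and>
     (\<forall>p\<in>ptype a. card {b \<in> Msub ptype M' s p. R b a} < cap s p)}"
    using Cons.IH[of M1] Cons.prems M'_M1 by auto
  have "M \<subseteq> M'" using IH unfolding M1_def by (auto split: if_splits)
  have "\<not> R x x" using Cons.prems(3) by auto
  have earlier: "Msub ptype M s p = {b \<in> Msub ptype M' s p. R b x}" for p
  proof (rule set_eqI, rule iffI)
    fix b assume "b \<in> Msub ptype M s p"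
    then show "b \<in> {b \<in> Msub ptype M' s p. R b x}"
      using Cons.prems(4) \<open>M \<subseteq> M'\<close> unfolding Msub_def by auto
  next
    fix b assume b: "b \<in> {b \<in> Msub ptype M' s p. R b x}"
    then have "R b x" by simp
    have "b \<notin> set xs"
      using Cons.prems(2,3) \<open>R b x\<close> by auto
    then show "b \<in> Msub ptype M s p"
      using b IH \<open>\<not> R x x\<close> unfolding Msub_def M1_def by (auto split: if_splits)
  qed
  have unassigned_M1: "unassigned M1 a = unassigned M a" if "a \<in> set xs" for a
    using Cons.prems(1) that unfolding M1_def unassigned_def by auto
  have admit_eq: "admit \<longleftrightarrow> unassigned M x \<and>
      (\<forall>p\<in>ptype x. card {b \<in> Msub ptype M' s p. R b x} < cap s p)"
    unfolding admit_def earlier ..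
  show ?case
    unfolding M'_def[symmetric]
    by (subst IH) (use unassigned_M1 admit_eq in \<open>auto simp: M1_def\<close>)
qed

locale tap =
  fixes A :: "'a set" and S :: "'s set" and P :: "'p set"
    and ptype :: "'a \<Rightarrow> 'p set" and acc :: "'a \<Rightarrow> 's set"
    and apref :: "'a \<Rightarrow> 's \<Rightarrow> 's \<Rightarrow> bool" and cap :: "'s \<Rightarrow> 'p \<Rightarrow> nat"
    and spref :: "'s \<Rightarrow> 'a \<Rightarrow> 'a \<Rightarrow> bool" and L :: "'s \<Rightarrow> 'a list"
  assumes inst: "tap_instance A S P ptype acc apref cap spref"
    and school_lists: "\<forall>s\<in>S. distinct (L s) \<and> set (L s) = {a\<in>A. s \<in> acc a}
                          \<and> sorted_wrt (spref s) (L s)"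
begin

lemma finite_A: "finite A"
  using inst unfolding tap_instance_def by auto

lemma acc_subset_S: "a \<in> A \<Longrightarrow> acc a \<subseteq> S"
  using inst unfolding tap_instance_def by auto

lemma ptype_subset_P: "a \<in> A \<Longrightarrow> ptype a \<subseteq> P"
  using inst unfolding tap_instance_def by auto

lemma ptype_two: "a \<in> A \<Longrightarrow> \<exists>p1 p2. p1 \<noteq> p2 \<and> ptype a = {p1, p2}"
  using inst unfolding tap_instance_def by auto

lemma apref_strict_lin: "a \<in> A \<Longrightarrow> strict_lin_on (acc a) (apref a)"
  using inst unfolding tap_instance_def by auto

lemma spref_strict_lin: "a \<in> A \<Longrightarrow> s \<in> acc a \<Longrightarrow> strict_lin_on {a\<in>A. s \<in> acc a} (spref s)"
  using inst acc_subset_S unfolding tap_instance_def by blast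

lemma finite_Msub: "M \<subseteq> Sigma A acc \<Longrightarrow> finite (Msub ptype M s p)"
  by (rule finite_subset[OF _ finite_A]) (auto simp: Msub_def)

definition room_for :: "('a \<times> 's) set \<Rightarrow> 's \<Rightarrow> 'p \<Rightarrow> 'a \<Rightarrow> bool" where
  "room_for M s p a \<longleftrightarrow> undersub ptype cap M s p \<or> (\<exists>b\<in>Msub ptype M s p. spref s a b)"

definition preferred_at :: "('a \<times> 's) set \<Rightarrow> 's \<Rightarrow> 'p \<Rightarrow> 'a \<Rightarrow> 'a set" where
  "preferred_at M s p a = {b \<in> Msub ptype M s p. spref s b a}"

definition admits :: "('a \<times> 's) set \<Rightarrow> 'a \<Rightarrow> 's \<Rightarrow> bool" where
  "admits M a s \<longleftrightarrow> (\<forall>t. (a, t) \<in> M \<longrightarrow> \<not> apref a t s) \<and>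
     (\<forall>p\<in>ptype a. card (preferred_at M s p a) < cap s p)"

definition consistent_on :: "'s set \<Rightarrow> ('a \<times> 's) set \<Rightarrow> bool" where
  "consistent_on T M \<longleftrightarrow> M \<subseteq> (SIGMA a:A. acc a \<inter> T) \<and>
     (\<forall>a\<in>A. \<forall>s\<in>acc a \<inter> T. (a, s) \<in> M \<longleftrightarrow> admits M a s)"

lemma blocking_cases_iff_room_for:
  assumes sub: "M \<subseteq> Sigma A acc" and "p1 \<noteq> p2"
  shows "((undersub ptype cap M s p1 \<and> undersub ptype cap M s p2) \<or>
         (undersub ptype cap M s p1 \<and> (\<exists>b\<in>Msub ptype M s p2. spref s a b)) \<or>
         (undersub ptype cap M s p2 \<and> (\<exists>b\<in>Msub ptype M s p1. spref s a b)) \<or>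
         (\<exists>b\<in>Msub2 ptype M s p1 p2. spref s a b) \<or>
         (\<exists>a1\<in>Msub ptype M s p1. \<exists>a2\<in>Msub ptype M s p2.
             a1 \<noteq> a2 \<and> spref s a a1 \<and> spref s a a2))
     \<longleftrightarrow> room_for M s p1 a \<and> room_for M s p2 a"
    (is "?cases \<longleftrightarrow> _")
proof
  assume ?cases
  then show "room_for M s p1 a \<and> room_for M s p2 a"
    unfolding room_for_def Msub_def Msub2_def by auto
next
  assume room: "room_for M s p1 a \<and> room_for M s p2 a"
  show ?cases
  proof (cases "undersub ptype cap M s p1 \<or> undersub ptype cap M s p2")
    case True
    then show ?thesis using room unfolding room_for_def by blast
  next
    case False
    then obtain b1 b2 where b1: "b1 \<in> Msub ptype M s p1" "spref s a b1"
      and b2: "b2 \<in> Msub ptype M s p2" "spref s a b2"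
      using room unfolding room_for_def by blast
    show ?thesis
    proof (cases "b1 = b2")
      case True
      have "b1 \<in> A" using b1 sub unfolding Msub_def by auto
      moreover have "p1 \<in> ptype b1" "p2 \<in> ptype b1" using b1 b2 True unfolding Msub_def by auto
      ultimately have "ptype b1 = {p1, p2}"
        using ptype_two[OF \<open>b1 \<in> A\<close>] \<open>p1 \<noteq> p2\<close> by auto
      then have "b1 \<in> Msub2 ptype M s p1 p2" using b1 unfolding Msub_def Msub2_def by auto
      then show ?thesis using b1 by blast
    next
      case False
      then show ?thesis using b1 b2 by blast
    qed
  qed
qed

lemma blocks_iff_room_for:
  assumes "M \<subseteq> Sigma A acc"
  shows "blocks A ptype acc apref cap spref M a s \<longleftrightarrow> a \<in> A \<and> s \<in> acc a \<and>
     (unassigned M a \<or> (\<exists>s'. (a, s') \<in> M \<and> apref a s s')) \<and> (\<forall>p\<in>ptype a. room_for M s p a)"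
proof -
  have two_subjects: "(\<exists>p1 p2. p1 \<noteq> p2 \<and> ptype a = {p1, p2} \<and> room_for M s p1 a \<and> room_for M s p2 a)
        \<longleftrightarrow> (\<forall>p\<in>ptype a. room_for M s p a)" if "a \<in> A"
    using ptype_two[OF that] by auto
  have "blocks A ptype acc apref cap spref M a s \<longleftrightarrow> a \<in> A \<and> s \<in> acc a \<and>
     (unassigned M a \<or> (\<exists>s'. (a, s') \<in> M \<and> apref a s s')) \<and>
     (\<exists>p1 p2. p1 \<noteq> p2 \<and> ptype a = {p1, p2} \<and> room_for M s p1 a \<and> room_for M s p2 a)"
    unfolding blocks_def by (simp add: blocking_cases_iff_room_for[OF assms] cong: conj_cong)
  also have "\<dots> \<longleftrightarrow> a \<in> A \<and> s \<in> acc a \<and>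
     (unassigned M a \<or> (\<exists>s'. (a, s') \<in> M \<and> apref a s s')) \<and> (\<forall>p\<in>ptype a. room_for M s p a)"
    using two_subjects by (simp cong: conj_cong)
  finally show ?thesis .
qed

lemma room_for_iff_card_preferred_at_less:
  assumes sub: "M \<subseteq> Sigma A acc" and a: "a \<in> A" "s \<in> acc a" and nas: "(a, s) \<notin> M"
    and le: "card (Msub ptype M s p) \<le> cap s p"
  shows "room_for M s p a \<longleftrightarrow> card (preferred_at M s p a) < cap s p"
proof -
  let ?X = "Msub ptype M s p" and ?F = "preferred_at M s p a"
  have fin: "finite ?X" using finite_Msub[OF sub] .
  have F_sub: "?F \<subseteq> ?X" unfolding preferred_at_def by auto
  have lin: "strict_lin_on {a\<in>A. s \<in> acc a} (spref s)" using spref_strict_lin[OF a] .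
  have acceptable: "b \<in> A \<and> s \<in> acc b" if "b \<in> ?X" for b
    using that sub unfolding Msub_def by auto
  show ?thesis
  proof
    assume "room_for M s p a"
    then consider "card ?X < cap s p" | b where "b \<in> ?X" "spref s a b"
      unfolding room_for_def undersub_def by blast
    then show "card ?F < cap s p"
    proof cases
      case 1
      then show ?thesis using card_mono[OF fin F_sub] by linarith
    next
      case (2 b)
      then have "b \<notin> ?F"
        using strict_lin_on_asym[OF lin] acceptable a unfolding preferred_at_def by blast
      then have "card ?F < card ?X" using psubset_card_mono[OF fin] F_sub \<open>b \<in> ?X\<close> by blast
      then show ?thesis using le by linarith
    qed
  next
    assume lt: "card ?F < cap s p"
    show "room_for M s p a"
    proof (cases "undersub ptype cap M s p")
      case False
      then have "card ?F < card ?X" using lt unfolding undersub_def by linarith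
      then have "?X \<noteq> ?F" by auto
      then obtain b where b: "b \<in> ?X" "b \<notin> ?F" using F_sub by blast
      have "b \<noteq> a" using b(1) nas unfolding Msub_def by auto
      then have "spref s a b"
        using b strict_lin_on_total[OF lin] acceptable a unfolding preferred_at_def by blast
      then show ?thesis using b(1) unfolding room_for_def by blast
    qed (simp add: room_for_def)
  qed
qed

lemma consistent_on_S_iff:
  "consistent_on S M \<longleftrightarrow> M \<subseteq> Sigma A acc \<and> (\<forall>a\<in>A. \<forall>s\<in>acc a. (a, s) \<in> M \<longleftrightarrow> admits M a s)"
proof -
  have "acc a \<inter> S = acc a" if "a \<in> A" for a using acc_subset_S[OF that] by blast
  then show ?thesis unfolding consistent_on_def by (auto simp: Sigma_def)
qed

lemma matching_admits_matched:
  assumes N: "is_matching A S P ptype acc cap N" and as: "(a, s) \<in> N"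
  shows "admits N a s"
proof -
  have sub: "N \<subseteq> Sigma A acc" and a: "a \<in> A" "s \<in> acc a"
    using N as unfolding is_matching_def is_assignment_def by auto
  have "\<not> apref a t s" if "(a, t) \<in> N" for t
  proof -
    have "t = s" using N as that unfolding is_matching_def is_assignment_def by blast
    then show ?thesis using strict_lin_on_irrefl[OF apref_strict_lin] a by blast
  qed
  moreover have "card (preferred_at N s p a) < cap s p" if p: "p \<in> ptype a" for p
  proof -
    have "a \<in> Msub ptype N s p" using as p unfolding Msub_def by simp
    moreover have "a \<notin> preferred_at N s p a"
      using strict_lin_on_irrefl[OF spref_strict_lin[OF a]] a unfolding preferred_at_def by blast
    ultimately have "preferred_at N s p a \<subset> Msub ptype N s p" unfolding preferred_at_def by blast
    then have "card (preferred_at N s p a) < card (Msub ptype N s p)"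
      using psubset_card_mono[OF finite_Msub[OF sub]] by blast
    also have "\<dots> \<le> cap s p"
      using N acc_subset_S[OF a(1)] a(2) ptype_subset_P[OF a(1)] p unfolding is_matching_def by blast
    finally show ?thesis .
  qed
  ultimately show ?thesis unfolding admits_def by blast
qed

lemma stable_imp_consistent:
  assumes stable: "stable A S P ptype acc apref cap spref N"
  shows "consistent_on S N"
proof -
  have N: "is_matching A S P ptype acc cap N" using stable unfolding stable_def by blast
  have sub: "N \<subseteq> Sigma A acc" using N unfolding is_matching_def is_assignment_def by auto
  have "(a, s) \<in> N" if a: "a \<in> A" "s \<in> acc a" and adm: "admits N a s" for a s
  proof (rule ccontr)
    assume nas: "(a, s) \<notin> N"
    have "unassigned N a \<or> (\<exists>s'. (a, s') \<in> N \<and> apref a s s')"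
    proof (cases "unassigned N a")
      case False
      then obtain s' where s': "(a, s') \<in> N" unfolding unassigned_def by blast
      then have "s' \<in> acc a" "s' \<noteq> s" "\<not> apref a s' s" using sub nas adm unfolding admits_def by auto
      then have "apref a s s'" using strict_lin_on_total[OF apref_strict_lin[OF a(1)]] a(2) by blast
      then show ?thesis using s' by blast
    qed simp
    moreover have "room_for N s p a" if p: "p \<in> ptype a" for p
    proof -
      have "card (Msub ptype N s p) \<le> cap s p"
        using N acc_subset_S[OF a(1)] a(2) ptype_subset_P[OF a(1)] p unfolding is_matching_def by blast
      then show ?thesis
        using room_for_iff_card_preferred_at_less[OF sub a nas] adm p unfolding admits_def by blast
    qed
    ultimately have "blocks A ptype acc apref cap spref N a s"
      using blocks_iff_room_for[OF sub] a by blast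
    then show False using stable unfolding stable_def by blast
  qed
  then show ?thesis
    unfolding consistent_on_S_iff using sub matching_admits_matched[OF N] by blast
qed

lemma consistent_unique_school:
  assumes M: "consistent_on S M" and "(a, s) \<in> M" "(a, t) \<in> M"
  shows "s = t"
proof (rule ccontr)
  assume "s \<noteq> t"
  have a: "a \<in> A" "s \<in> acc a" "t \<in> acc a" using M assms(2,3) unfolding consistent_on_def by auto
  have "admits M a s" "admits M a t" using M assms(2,3) a unfolding consistent_on_S_iff by blast+
  then have "\<not> apref a t s" "\<not> apref a s t" using assms(2,3) unfolding admits_def by blast+
  then show False using strict_lin_on_total[OF apref_strict_lin[OF a(1)] a(2,3) \<open>s \<noteq> t\<close>] by blast
qed

lemma consistent_card_Msub_le:
  assumes M: "consistent_on S M" and s: "s \<in> S"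
  shows "card (Msub ptype M s p) \<le> cap s p"
proof (cases "Msub ptype M s p = {}")
  case False
  let ?X = "Msub ptype M s p"
  define xs where "xs = filter (\<lambda>b. b \<in> ?X) (L s)"
  have sub: "M \<subseteq> Sigma A acc" using M unfolding consistent_on_S_iff by blast
  have L: "distinct (L s)" "set (L s) = {a\<in>A. s \<in> acc a}" "sorted_wrt (spref s) (L s)"
    using school_lists s by auto
  have set_xs: "set xs = ?X" using sub L(2) unfolding xs_def Msub_def by auto
  have dist: "distinct xs" using L(1) unfolding xs_def by simp
  have "xs \<noteq> []" using False set_xs by auto
  then have sorted: "sorted_wrt (spref s) (butlast xs @ [last xs])"
    using L(3) unfolding xs_def by (simp add: sorted_wrt_filter)
  define y where "y = last xs"
  have "y \<in> ?X" using set_xs last_in_set[OF \<open>xs \<noteq> []\<close>] unfolding y_def by blast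
  then have y: "y \<in> A" "s \<in> acc y" "(y, s) \<in> M" "p \<in> ptype y" using sub unfolding Msub_def by auto
  have "set (butlast xs) \<subseteq> preferred_at M s p y"
    using sorted set_xs in_set_butlastD unfolding preferred_at_def y_def sorted_wrt_append by fastforce
  then have "card (set (butlast xs)) \<le> card (preferred_at M s p y)"
    by (rule card_mono[rotated]) (use finite_Msub[OF sub] in \<open>auto simp: preferred_at_def\<close>)
  moreover have "card (set (butlast xs)) = card ?X - 1"
    using dist distinct_card[OF distinct_butlast[OF dist]] distinct_card[OF dist] set_xs by simp
  moreover have "admits M y s" using M y unfolding consistent_on_S_iff by blast
  then have "card (preferred_at M s p y) < cap s p" using y(4) unfolding admits_def by blast
  ultimately show ?thesis by linarith
qed simp

lemma consistent_imp_matching: "consistent_on S M \<Longrightarrow> is_matching A S P ptype acc cap M"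
  unfolding is_matching_def is_assignment_def
  using consistent_unique_school consistent_card_Msub_le by (fastforce simp: consistent_on_S_iff)

lemma consistent_imp_not_blocks:
  assumes M: "consistent_on S M"
  shows "\<not> blocks A ptype acc apref cap spref M a s"
proof
  have sub: "M \<subseteq> Sigma A acc" using M unfolding consistent_on_S_iff by blast
  assume "blocks A ptype acc apref cap spref M a s"
  then have a: "a \<in> A" "s \<in> acc a"
    and wants: "unassigned M a \<or> (\<exists>s'. (a, s') \<in> M \<and> apref a s s')"
    and room: "\<forall>p\<in>ptype a. room_for M s p a"
    using blocks_iff_room_for[OF sub] by blast+
  have no_better: "\<not> apref a t s" if t: "(a, t) \<in> M" for t
  proof -
    obtain s' where "(a, s') \<in> M" "apref a s s'" using wants t unfolding unassigned_def by blast
    moreover have "t \<in> acc a" using sub t by blast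
    ultimately show ?thesis
      using consistent_unique_school[OF M t] strict_lin_on_asym[OF apref_strict_lin[OF a(1)]] a(2)
      by blast
  qed
  have nas: "(a, s) \<notin> M"
    using no_better wants consistent_unique_school[OF M] unfolding unassigned_def by blast
  have "card (preferred_at M s p a) < cap s p" if "p \<in> ptype a" for p
    using room_for_iff_card_preferred_at_less[OF sub a nas consistent_card_Msub_le[OF M]]
      acc_subset_S[OF a(1)] a(2) room that by blast
  then have "admits M a s" using no_better unfolding admits_def by blast
  then show False using M a nas unfolding consistent_on_S_iff by blast
qed

lemma stable_iff_consistent: "stable A S P ptype acc apref cap spref M \<longleftrightarrow> consistent_on S M"
  using stable_imp_consistent consistent_imp_matching consistent_imp_not_blocks
  unfolding stable_def by blast

end

locale tap_master_list = tap +
  fixes ms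
  assumes ms_distinct: "distinct ms" and ms_set: "set ms = S"
    and master: "\<forall>a\<in>A. \<forall>s\<in>acc a. \<forall>s'\<in>acc a.
                   apref a s s' \<longleftrightarrow> (\<exists>i j. i < j \<and> j < length ms \<and> ms ! i = s \<and> ms ! j = s')"
begin

lemma apref_iff_index_less:
  assumes "a \<in> A" "s \<in> acc a" "t \<in> acc a"
  shows "apref a t s \<longleftrightarrow> index ms t < index ms s"
proof -
  have "t \<in> set ms" "s \<in> set ms" using acc_subset_S ms_set assms by auto
  with master assms show ?thesis by (simp add: ex_nth_less_iff_index_less[OF ms_distinct])
qed

lemma spref_index_less:
  assumes a: "a \<in> A" "s \<in> acc a" and b: "b \<in> A" "s \<in> acc b" and "spref s b a"
  shows "index (L s) b < index (L s) a"
proof (rule sorted_wrt_index_less)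
  show "sorted_wrt (spref s) (L s)" "b \<in> set (L s)" "a \<in> set (L s)"
    using school_lists acc_subset_S[OF a(1)] a b by auto
  show "\<not> spref s a b" using strict_lin_on_asym[OF spref_strict_lin[OF a]] a b \<open>spref s b a\<close> by blast
qed fact

lemma admits_cong:
  assumes M: "M \<subseteq> Sigma A acc" and N: "N \<subseteq> Sigma A acc" and a: "a \<in> A" "s \<in> acc a"
    and agree: "\<And>b t. (b, t) \<in> Sigma A acc \<Longrightarrow> index ms t < index ms s \<or> (t = s \<and> spref s b a)
                  \<Longrightarrow> (b, t) \<in> M \<longleftrightarrow> (b, t) \<in> N"
  shows "admits M a s \<longleftrightarrow> admits N a s"
proof -
  have "(a, t) \<in> M \<and> apref a t s \<longleftrightarrow> (a, t) \<in> N \<and> apref a t s" for t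
    using M N agree[of a t] apref_iff_index_less[OF a(1) a(2), of t] a by blast
  moreover have "preferred_at M s p a = preferred_at N s p a" for p
    using M N agree unfolding preferred_at_def Msub_def by blast
  ultimately show ?thesis unfolding admits_def by metis
qed

lemma consistent_unique:
  assumes M: "consistent_on S M" and N: "consistent_on S N"
  shows "M = N"
proof -
  have sub: "M \<subseteq> Sigma A acc" "N \<subseteq> Sigma A acc" using M N unfolding consistent_on_S_iff by blast+
  define rank where "rank = (\<lambda>(b, t). (index ms t, index (L t) b))"
  have "x \<in> M \<longleftrightarrow> x \<in> N" if "x \<in> Sigma A acc" for x
    using that
  proof (induction "rank x" arbitrary: x rule: less_induct)
    case less
    then obtain a s where x: "x = (a, s)" and a: "a \<in> A" "s \<in> acc a" by blast
    have "admits M a s \<longleftrightarrow> admits N a s"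
    proof (rule admits_cong[OF sub a])
      fix b t assume bt: "(b, t) \<in> Sigma A acc" "index ms t < index ms s \<or> (t = s \<and> spref s b a)"
      then have "rank (b, t) < rank x"
        using spref_index_less[OF a] unfolding rank_def x by (auto simp: less_prod_def)
      then show "(b, t) \<in> M \<longleftrightarrow> (b, t) \<in> N" using less.hyps bt(1) by blast
    qed
    then show ?case using M N a unfolding x consistent_on_S_iff by blast
  qed
  then show ?thesis using sub by blast
qed

lemma dsd_school_consistent_on:
  assumes M: "consistent_on (set (take k ms)) M" and k: "k < length ms"
  shows "consistent_on (set (take (Suc k) ms)) (dsd_school ptype cap (ms ! k) (L (ms ! k)) M)"
proof -
  define s where "s = ms ! k"
  define T where "T = set (take k ms)"
  define M' where "M' = dsd_school ptype cap s (L s) M"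
  have "s \<in> S" using k ms_set unfolding s_def by auto
  have L: "distinct (L s)" "set (L s) = {a\<in>A. s \<in> acc a}" "sorted_wrt (spref s) (L s)"
    using school_lists \<open>s \<in> S\<close> by auto
  have before_s: "index ms t < index ms s" if "t \<in> T" for t
    using index_less_if_in_take[OF ms_distinct] that index_nth[OF ms_distinct k]
    unfolding T_def s_def by simp
  have take_Suc: "set (take (Suc k) ms) = insert s T"
    using k unfolding s_def T_def by (simp add: take_Suc_conv_app_nth)
  have M_sub: "M \<subseteq> (SIGMA a:A. acc a \<inter> T)" and M_adm: "\<forall>a\<in>A. \<forall>t\<in>acc a \<inter> T. (a, t) \<in> M \<longleftrightarrow> admits M a t"
    using M unfolding consistent_on_def T_def by auto
  have no_s: "(b, s) \<notin> M" for b using M_sub before_s by blast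
  have asym: "\<forall>a\<in>set (L s). \<forall>b\<in>set (L s). spref s a b \<longrightarrow> \<not> spref s b a"
    using strict_lin_on_asym[OF spref_strict_lin] L(2) by blast
  define fits where "fits a \<longleftrightarrow> (\<forall>p\<in>ptype a. card (preferred_at M' s p a) < cap s p)" for a
  have "M' = M \<union> {(a, s) | a. a \<in> set (L s) \<and> unassigned M a \<and> fits a}"
    unfolding M'_def fits_def preferred_at_def
    by (rule dsd_school_eq[OF L(1,3) asym]) (use no_s in blast)
  then have mem_M': "(b, t) \<in> M' \<longleftrightarrow> (b, t) \<in> M \<or> (t = s \<and> b \<in> set (L s) \<and> unassigned M b \<and> fits b)"
    for b t by blast
  have M'_sub: "M' \<subseteq> (SIGMA a:A. acc a \<inter> insert s T)" using mem_M' M_sub L(2) by auto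
  then have sub: "M' \<subseteq> Sigma A acc" "M \<subseteq> Sigma A acc" using M_sub by blast+
  have earlier: "(a, t) \<in> M' \<longleftrightarrow> admits M' a t" if a: "a \<in> A" "t \<in> acc a" "t \<in> T" for a t
  proof -
    have away_from_s: "(b, t') \<in> M' \<longleftrightarrow> (b, t') \<in> M"
      if "index ms t' < index ms t \<or> t' = t" for b t'
      using that before_s[OF a(3)] mem_M' by auto
    have "(a, t) \<in> M' \<longleftrightarrow> admits M a t"
      using away_from_s[of t a] M_adm a by auto
    also have "\<dots> \<longleftrightarrow> admits M' a t"
      using admits_cong[OF sub(2,1) a(1,2)] away_from_s by blast
    finally show ?thesis .
  qed
  have at_s: "(a, s) \<in> M' \<longleftrightarrow> admits M' a s" if a: "a \<in> A" "s \<in> acc a" for a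
  proof -
    have "unassigned M a \<longleftrightarrow> (\<forall>t. (a, t) \<in> M' \<longrightarrow> \<not> apref a t s)"
    proof
      assume "unassigned M a"
      then have "(a, t) \<in> M' \<Longrightarrow> t = s" for t using mem_M' unfolding unassigned_def by blast
      then show "\<forall>t. (a, t) \<in> M' \<longrightarrow> \<not> apref a t s"
        using strict_lin_on_irrefl[OF apref_strict_lin[OF a(1)] a(2)] by blast
    next
      assume no_better: "\<forall>t. (a, t) \<in> M' \<longrightarrow> \<not> apref a t s"
      show "unassigned M a" unfolding unassigned_def
      proof (intro allI notI)
        fix t assume t: "(a, t) \<in> M"
        then have "t \<in> acc a" "index ms t < index ms s" using M_sub before_s by auto
        then have "apref a t s" using apref_iff_index_less[OF a] by blast
        then show False using no_better t mem_M' by blast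
      qed
    qed
    moreover have "(a, s) \<in> M' \<longleftrightarrow> unassigned M a \<and> fits a"
      using mem_M' no_s a L(2) by auto
    ultimately show ?thesis unfolding admits_def fits_def by blast
  qed
  show ?thesis
    unfolding consistent_on_def take_Suc s_def[symmetric] M'_def[symmetric]
    using M'_sub earlier at_s by blast
qed

lemma consistent_on_dsd_prefix:
  "k \<le> length ms \<Longrightarrow>
    consistent_on (set (take k ms)) (foldl (\<lambda>M s. dsd_school ptype cap s (L s) M) {} (take k ms))"
proof (induction k)
  case 0
  then show ?case unfolding consistent_on_def by simp
next
  case (Suc k)
  then have k: "k < length ms" by simp
  then have fold: "foldl (\<lambda>M s. dsd_school ptype cap s (L s) M) {} (take (Suc k) ms) =
      dsd_school ptype cap (ms ! k) (L (ms ! k)) (foldl (\<lambda>M s. dsd_school ptype cap s (L s) M) {} (take k ms))"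
    unfolding take_Suc_conv_app_nth[OF k] by simp
  show ?case
    unfolding fold by (rule dsd_school_consistent_on[OF Suc.IH[OF less_imp_le[OF k]] k])
qed

lemma dsd_consistent: "consistent_on S (dsd ptype cap L ms)"
  using consistent_on_dsd_prefix[of "length ms"] ms_set unfolding dsd_def by simp

theorem stable_matchings_eq_dsd:
  "{M. stable A S P ptype acc apref cap spref M} = {dsd ptype cap L ms}"
  using stable_iff_consistent consistent_unique dsd_consistent by blast

end

theorem theorem3:
  fixes A :: "'a set" and S :: "'s set" and P :: "'p set"
    and ptype :: "'a \<Rightarrow> 'p set" and acc :: "'a \<Rightarrow> 's set"
    and apref :: "'a \<Rightarrow> 's \<Rightarrow> 's \<Rightarrow> bool" and cap :: "'s \<Rightarrow> 'p \<Rightarrow> nat"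
    and spref :: "'s \<Rightarrow> 'a \<Rightarrow> 'a \<Rightarrow> bool"
    and ms :: "'s list" and L :: "'s \<Rightarrow> 'a list"
  assumes inst: "tap_instance A S P ptype acc apref cap spref"
    and ms_enum: "distinct ms" "set ms = S"
    and master: "\<forall>a\<in>A. \<forall>s\<in>acc a. \<forall>s'\<in>acc a.
                   apref a s s' \<longleftrightarrow> (\<exists>i j. i < j \<and> j < length ms \<and> ms ! i = s \<and> ms ! j = s')"
    and school_lists: "\<forall>s\<in>S. distinct (L s) \<and> set (L s) = {a\<in>A. s \<in> acc a}
                          \<and> sorted_wrt (spref s) (L s)"
  shows "{M. stable A S P ptype acc apref cap spref M} = {dsd ptype cap L ms}"
proof -
  interpret tap_master_list A S P ptype acc apref cap spref L ms
    using assms by unfold_locales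
  show ?thesis by (rule stable_matchings_eq_dsd)
qed

end
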